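(* Let $G$ be a group with finite presentation $\mathcal P=\langle t,\mathcal A:\mathcal R,\ t^{-1}at=\phi(a)\ (a\in\mathcal A)\rangle$, $A=\langle\mathcal A\rangle\le G$, and $X$ its Cayley 2-complex. Let $C$ be a finite subcomplex of $X$, with $N(C)$ and $M(v,C)$ as in the context, and let $M(C)=\max\{M(v,C): v \text{ a vertex of } C\}$. Then every vertex $v\in C$ lies in $(t^{N(C)}At^{-N(C)})\,(t^{N(C)}\{1,t^{-1},\dots,t^{-M(C)}\})$. Moreover, for positive integers $M,N$ and any $w\in(t^NAt^{-N})(t^N\{1,t^{-1},\dots,t^{-M}\})$, we have $wA\subset(t^NAt^{-N})(t^N\{1,t^{-1},\dots,t^{-M}\})$.
   Context: $\mathcal A$ is finite, $\mathcal R\subset F(\mathcal A)$ finite, $\phi:F(\mathcal A)\to F(\mathcal A)$ a homomorphism. The Cayley 2-complex $X$ has vertex set $G$. For each vertex $v$ of $C$ write $v=t^{n(v)}a_vt^{-m(v)}$ with $a_v\in A$, $n(v),m(v)\ge0$; $N(C)=\max\{n(v):v\in C\}$ and $M(v,C)=N(C)-n(v)+m(v)$. Note $(t^NAt^{-N})(t^N\{1,\dots,t^{-M}\})=\{t^Nat^{-m}:a\in A,\ 0\le m\le M\}$. *)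

theory Defs
  imports "HOL-Algebra.Algebra"
begin

text \<open>Words in a free group on an alphabet of type 'x: a letter is (x, b) where
  b = True means the inverse generator x^-1.\<close>
type_synonym 'x word = "('x \<times> bool) list"

definition inv_word :: "'x word \<Rightarrow> 'x word" where
  "inv_word w = rev (map (\<lambda>(x, b). (x, \<not> b)) w)"

definition eval_word :: "('g, 'c) monoid_scheme \<Rightarrow> ('x \<Rightarrow> 'g) \<Rightarrow> 'x word \<Rightarrow> 'g" where
  "eval_word G f w =
     foldr (\<lambda>(x, b) acc. (if b then inv\<^bsub>G\<^esub> (f x) else f x) \<otimes>\<^bsub>G\<^esub> acc) w \<one>\<^bsub>G\<^esub>"

inductive pres_eq :: "'x word set \<Rightarrow> 'x word \<Rightarrow> 'x word \<Rightarrow> bool" for Rel where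
  refl: "pres_eq Rel w w"
| sym: "pres_eq Rel w w' \<Longrightarrow> pres_eq Rel w' w"
| trans: "pres_eq Rel u v \<Longrightarrow> pres_eq Rel v w \<Longrightarrow> pres_eq Rel u w"
| cancel: "pres_eq Rel (u @ [(x, b), (x, \<not> b)] @ v) (u @ v)"
| relator: "r \<in> Rel \<Longrightarrow> pres_eq Rel (u @ r @ v) (u @ v)"

definition word_over :: "'x set \<Rightarrow> 'x word \<Rightarrow> bool" where
  "word_over S w \<longleftrightarrow> fst ` set w \<subseteq> S"

definition is_presentation ::
  "('g, 'c) monoid_scheme \<Rightarrow> 'x set \<Rightarrow> 'x word set \<Rightarrow> ('x \<Rightarrow> 'g) \<Rightarrow> bool" where
  "is_presentation G S Rel f \<longleftrightarrow>
     group G \<and> f ` S \<subseteq> carrier G \<and> generate G (f ` S) = carrier G \<and>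
     (\<forall>w. word_over S w \<longrightarrow> (eval_word G f w = \<one>\<^bsub>G\<^esub> \<longleftrightarrow> pres_eq Rel w []))"

text \<open>The relators of P = < t, A : R, t^-1 a t = phi(a) (a in A) >, on the alphabet
  'a option, where None stands for t and Some a for a in A.\<close>
definition HNN_relators :: "'a set \<Rightarrow> 'a word set \<Rightarrow> ('a \<Rightarrow> 'a word) \<Rightarrow> 'a option word set" where
  "HNN_relators \<A> R \<phi> =
     (map (\<lambda>(x, b). (Some x, b)) ` R) \<union>
     ((\<lambda>a. [(None, True), (Some a, False), (None, False)]
            @ inv_word (map (\<lambda>(x, b). (Some x, b)) (\<phi> a))) ` \<A>)"

definition TAset :: "('g, 'c) monoid_scheme \<Rightarrow> 'g \<Rightarrow> 'g set \<Rightarrow> nat \<Rightarrow> nat \<Rightarrow> 'g set" where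
  "TAset G t A N M =
     set_mult G ((\<lambda>a. t [^]\<^bsub>G\<^esub> N \<otimes>\<^bsub>G\<^esub> a \<otimes>\<^bsub>G\<^esub> inv\<^bsub>G\<^esub> (t [^]\<^bsub>G\<^esub> N)) ` A)
                {t [^]\<^bsub>G\<^esub> N \<otimes>\<^bsub>G\<^esub> inv\<^bsub>G\<^esub> (t [^]\<^bsub>G\<^esub> k) | k. k \<le> M}"

end

theory Submission
  imports Defs
begin

text \<open>The relators t^-1 a t = phi(a) show that conjugation by t^-1 maps every generator of
  A into A, hence t^-k A t^k \<subseteq> A for all k. With d = N - n, a vertex t^n a t^-m equals
  (t^N a' t^-N)(t^N t^-(m+d)) where a' = t^-d a t^d \<in> A, which gives the first claim; and
  t^-k b = (t^-k b t^k) t^-k lets a right factor b \<in> A be absorbed into the left factor,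
  which gives the second.\<close>

lemma eval_word_Nil [simp]: "eval_word G f [] = \<one>\<^bsub>G\<^esub>"
  by (simp add: eval_word_def)

lemma eval_word_Cons [simp]:
  "eval_word G f ((x, b) # w) =
     (if b then inv\<^bsub>G\<^esub> (f x) else f x) \<otimes>\<^bsub>G\<^esub> eval_word G f w"
  by (simp add: eval_word_def)

lemma (in group) eval_word_in_subgroup:
  assumes "subgroup H G" and "\<forall>x\<in>fst ` set w. f x \<in> H"
  shows "eval_word G f w \<in> H"
  using assms(2)
proof (induction w)
  case Nil
  then show ?case using subgroup.one_closed[OF assms(1)] by simp
next
  case (Cons p w)
  obtain x b where p: "p = (x, b)" by force
  then have "f x \<in> H" and "eval_word G f w \<in> H" using Cons by auto
  then show ?case
    using p subgroup.m_closed[OF assms(1)] subgroup.m_inv_closed[OF assms(1)] by auto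
qed

lemma (in group) m_inv_cancel_left:
  "x \<in> carrier G \<Longrightarrow> y \<in> carrier G \<Longrightarrow> x \<otimes> (inv x \<otimes> y) = y"
  by (simp add: m_assoc[symmetric])

lemma (in group) inv_m_cancel_left:
  "x \<in> carrier G \<Longrightarrow> y \<in> carrier G \<Longrightarrow> inv x \<otimes> (x \<otimes> y) = y"
  by (simp add: m_assoc[symmetric])

lemma (in group) inv_conj_generate_closed:
  assumes S: "S \<subseteq> carrier G" and t: "t \<in> carrier G"
    and gens: "\<forall>g\<in>S. inv t \<otimes> g \<otimes> t \<in> generate G S"
    and x: "x \<in> generate G S"
  shows "inv t \<otimes> x \<otimes> t \<in> generate G S"
  using x
proof (induction x rule: generate.induct)
  case one
  then show ?case using t generate.one by simp
next
  case (incl g)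
  then show ?case using gens by blast
next
  case (inv g)
  then have g: "g \<in> carrier G" using S by blast
  have "inv t \<otimes> inv g \<otimes> t = inv (inv t \<otimes> g \<otimes> t)"
    using g t by (simp add: inv_mult_group m_assoc)
  then show ?case
    using gens inv.hyps generate_m_inv_closed[OF S] by metis
next
  case (eng g h)
  have "g \<in> carrier G" "h \<in> carrier G" using eng.hyps generate_in_carrier[OF S] by auto
  then have "inv t \<otimes> (g \<otimes> h) \<otimes> t = (inv t \<otimes> g \<otimes> t) \<otimes> (inv t \<otimes> h \<otimes> t)"
    using t by (simp add: m_assoc m_inv_cancel_left)
  then show ?case using eng.IH generate.eng by metis
qed

lemma (in group) inv_conj_pow_closed:
  assumes H: "subgroup H G" and t: "t \<in> carrier G"
    and conj: "\<And>x. x \<in> H \<Longrightarrow> inv t \<otimes> x \<otimes> t \<in> H"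
    and x: "x \<in> H"
  shows "inv (t [^] (k::nat)) \<otimes> x \<otimes> t [^] k \<in> H"
proof (induction k)
  case 0
  then show ?case using x subgroup.mem_carrier[OF H] by simp
next
  case (Suc k)
  have "x \<in> carrier G" using x subgroup.mem_carrier[OF H] by blast
  then have "inv (t [^] Suc k) \<otimes> x \<otimes> t [^] Suc k =
             inv t \<otimes> (inv (t [^] k) \<otimes> x \<otimes> t [^] k) \<otimes> t"
    using t by (simp add: inv_mult_group m_assoc)
  then show ?case using conj[OF Suc.IH] by simp
qed

lemma (in group) HNN_inv_conj_generator:
  assumes phi_over: "\<forall>a\<in>\<A>. word_over \<A> (\<phi> a)"
    and pres: "is_presentation G (insert None (Some ` \<A>)) (HNN_relators \<A> R \<phi>) f"
    and a: "a \<in> \<A>"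
  shows "inv (f None) \<otimes> f (Some a) \<otimes> f None \<in> generate G (f ` Some ` \<A>)"
proof -
  define t where "t = f None"
  define H where "H = generate G (f ` Some ` \<A>)"
  define u where "u = inv_word (map (\<lambda>(x, b). (Some x, b)) (\<phi> a))"
  define r where "r = [(None, True), (Some a, False), (None, False)] @ u"
  have carr: "f ` insert None (Some ` \<A>) \<subseteq> carrier G"
    using pres by (simp add: is_presentation_def)
  then have t: "t \<in> carrier G" and fa: "f (Some a) \<in> carrier G"
    using a by (auto simp: t_def)
  have H: "subgroup H G"
    unfolding H_def by (rule generate_is_subgroup) (use carr in auto)
  have u_over: "fst ` set u \<subseteq> Some ` \<A>"
    using phi_over a unfolding u_def inv_word_def word_over_def by force
  have "r \<in> HNN_relators \<A> R \<phi>"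
    unfolding HNN_relators_def r_def u_def using a by blast
  then have "pres_eq (HNN_relators \<A> R \<phi>) ([] @ r @ []) ([] @ [])"
    by (rule pres_eq.relator)
  moreover have "word_over (insert None (Some ` \<A>)) r"
    using u_over a unfolding r_def word_over_def by auto
  ultimately have r_one: "eval_word G f r = \<one>"
    using pres by (simp add: is_presentation_def)
  have uH: "eval_word G f u \<in> H"
    using eval_word_in_subgroup[OF H] u_over unfolding H_def by (force intro: generate.incl)
  then have u: "eval_word G f u \<in> carrier G" using subgroup.mem_carrier[OF H] by blast
  have "(inv t \<otimes> f (Some a) \<otimes> t) \<otimes> eval_word G f u = \<one>"
    using r_one t fa u by (simp add: r_def t_def m_assoc)
  then have "inv (eval_word G f u) = inv t \<otimes> f (Some a) \<otimes> t"
    by (rule inv_equality) (use u t fa in auto)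
  then show ?thesis
    using uH subgroup.m_inv_closed[OF H] unfolding H_def t_def by metis
qed

lemma (in group) HNN_inv_conj_pow_closed:
  assumes phi_over: "\<forall>a\<in>\<A>. word_over \<A> (\<phi> a)"
    and pres: "is_presentation G (insert None (Some ` \<A>)) (HNN_relators \<A> R \<phi>) f"
    and x: "x \<in> generate G (f ` Some ` \<A>)"
  shows "inv (f None [^] (k::nat)) \<otimes> x \<otimes> f None [^] k \<in> generate G (f ` Some ` \<A>)"
proof -
  have carr: "f ` insert None (Some ` \<A>) \<subseteq> carrier G"
    using pres by (simp add: is_presentation_def)
  then have S: "f ` Some ` \<A> \<subseteq> carrier G" and t: "f None \<in> carrier G" by auto
  show ?thesis
  proof (rule inv_conj_pow_closed[OF generate_is_subgroup[OF S] t _ x])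
    fix y assume "y \<in> generate G (f ` Some ` \<A>)"
    then show "inv f None \<otimes> y \<otimes> f None \<in> generate G (f ` Some ` \<A>)"
      using inv_conj_generate_closed[OF S t] HNN_inv_conj_generator[OF phi_over pres] by blast
  qed
qed

lemma (in group) normal_form_in_TAset:
  assumes H: "H \<subseteq> carrier G" and t: "t \<in> carrier G"
    and conj: "\<And>x k. x \<in> H \<Longrightarrow> inv (t [^] (k::nat)) \<otimes> x \<otimes> t [^] k \<in> H"
    and a: "a \<in> H" and nN: "n \<le> N" and M: "N - n + m \<le> M"
  shows "t [^] n \<otimes> a \<otimes> inv (t [^] m) \<in> TAset G t H N M"
proof -
  define d where "d = N - n"
  have tN: "t [^] N = t [^] n \<otimes> t [^] d"
    using nat_pow_mult[OF t, of n d] nN by (simp add: d_def)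
  have tk: "t [^] (m + d) = t [^] m \<otimes> t [^] d"
    using nat_pow_mult[OF t] by simp
  have "a \<in> carrier G" using a H by blast
  then have "(t [^] N \<otimes> (inv (t [^] d) \<otimes> a \<otimes> t [^] d) \<otimes> inv (t [^] N))
               \<otimes> (t [^] N \<otimes> inv (t [^] (m + d)))
             = t [^] n \<otimes> a \<otimes> inv (t [^] m)"
    unfolding tN tk using t by (simp add: m_assoc inv_mult_group m_inv_cancel_left inv_m_cancel_left)
  moreover have "m + d \<le> M" using M by (simp add: d_def)
  ultimately show ?thesis
    unfolding TAset_def set_mult_def using conj[OF a] by blast
qed

lemma (in group) TAset_mult_subgroup:
  assumes H: "subgroup H G" and t: "t \<in> carrier G"
    and conj: "\<And>x k. x \<in> H \<Longrightarrow> inv (t [^] (k::nat)) \<otimes> x \<otimes> t [^] k \<in> H"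
    and w: "w \<in> TAset G t H N M"
  shows "set_mult G {w} H \<subseteq> TAset G t H N M"
proof
  fix y assume "y \<in> set_mult G {w} H"
  then obtain b where b: "b \<in> H" and y: "y = w \<otimes> b" by (auto simp: set_mult_def)
  obtain a k where a: "a \<in> H" and k: "k \<le> M"
    and w_eq: "w = (t [^] N \<otimes> a \<otimes> inv (t [^] N)) \<otimes> (t [^] N \<otimes> inv (t [^] k))"
    using w unfolding TAset_def set_mult_def by blast
  have "a \<in> carrier G" "b \<in> carrier G" using a b subgroup.mem_carrier[OF H] by auto
  then have "(t [^] N \<otimes> (a \<otimes> (inv (t [^] k) \<otimes> b \<otimes> t [^] k)) \<otimes> inv (t [^] N))
               \<otimes> (t [^] N \<otimes> inv (t [^] k)) = y"
    unfolding y w_eq using t by (simp add: m_assoc m_inv_cancel_left inv_m_cancel_left)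
  moreover have "a \<otimes> (inv (t [^] k) \<otimes> b \<otimes> t [^] k) \<in> H"
    using a conj[OF b] subgroup.m_closed[OF H] by blast
  ultimately show "y \<in> TAset G t H N M"
    unfolding TAset_def set_mult_def using k by blast
qed

theorem lemma5p3:
  fixes G :: "('g, 'c) monoid_scheme"
    and \<A> :: "'a set" and R :: "'a word set" and \<phi> :: "'a \<Rightarrow> 'a word"
    and f :: "'a option \<Rightarrow> 'g"
    and V :: "'g set"
    and n m :: "'g \<Rightarrow> nat" and av :: "'g \<Rightarrow> 'g"
  assumes fin_A: "finite \<A>" and fin_R: "finite R"
    and R_over: "\<forall>r\<in>R. word_over \<A> r"
    and phi_over: "\<forall>a\<in>\<A>. word_over \<A> (\<phi> a)"
    and pres: "is_presentation G (insert None (Some ` \<A>)) (HNN_relators \<A> R \<phi>) f"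
    and V_fin: "finite V" and V_ne: "V \<noteq> {}" and V_sub: "V \<subseteq> carrier G"
    and nf: "\<forall>v\<in>V. av v \<in> generate G (f ` Some ` \<A>) \<and>
               v = f None [^]\<^bsub>G\<^esub> n v \<otimes>\<^bsub>G\<^esub> av v \<otimes>\<^bsub>G\<^esub> inv\<^bsub>G\<^esub> (f None [^]\<^bsub>G\<^esub> m v)"
  shows "(let N = Max (n ` V);
              Mv = (\<lambda>v. N - n v + m v);
              MC = Max (Mv ` V)
          in \<forall>v\<in>V. v \<in> TAset G (f None) (generate G (f ` Some ` \<A>)) N MC)
      \<and> (\<forall>M N w. 0 < M \<and> 0 < N \<and> w \<in> TAset G (f None) (generate G (f ` Some ` \<A>)) N M
            \<longrightarrow> set_mult G {w} (generate G (f ` Some ` \<A>))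
                  \<subseteq> TAset G (f None) (generate G (f ` Some ` \<A>)) N M)"
proof -
  interpret group G using pres by (simp add: is_presentation_def)
  have S: "f ` Some ` \<A> \<subseteq> carrier G" and t: "f None \<in> carrier G"
    using pres by (auto simp: is_presentation_def)
  note H = generate_is_subgroup[OF S]
  note conj = HNN_inv_conj_pow_closed[OF phi_over pres]
  have "v \<in> TAset G (f None) (generate G (f ` Some ` \<A>)) (Max (n ` V))
              (Max ((\<lambda>v. Max (n ` V) - n v + m v) ` V))" if v: "v \<in> V" for v
  proof -
    have "n v \<le> Max (n ` V)" and "Max (n ` V) - n v + m v \<le> Max ((\<lambda>v. Max (n ` V) - n v + m v) ` V)"
      using v V_fin by simp_all
    then show ?thesis
      using nf v normal_form_in_TAset[OF subgroup.subset[OF H] t conj] by metis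
  qed
  moreover have "set_mult G {w} (generate G (f ` Some ` \<A>))
                   \<subseteq> TAset G (f None) (generate G (f ` Some ` \<A>)) N M"
    if "w \<in> TAset G (f None) (generate G (f ` Some ` \<A>)) N M" for w N M
    using TAset_mult_subgroup[OF H t conj that] .
  ultimately show ?thesis by (simp add: Let_def)
qed

end
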